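(* Let $t \ge 2$ and $d \ge 2$ be integers. Let $n \ge 2d$ be an integer for which there is an integer $r$ with $n^t \equiv r^t \pmod d$ and $0 \le r^t < d$. Then $\left\lfloor n^t/d \right\rfloor$ is composite. *)

theory Defs
  imports "HOL-Computational_Algebra.Primes" "HOL-Number_Theory.Cong" Complex_Main
begin

definition composite :: "int \<Rightarrow> bool" where
  "composite m \<longleftrightarrow> m > 1 \<and> \<not> prime m"

end

theory Submission
  imports Defs
begin

text \<open>Since \<open>n ^ t mod d = a ^ t\<close> with \<open>a = \<bar>r\<bar> < d\<close>, the floor \<open>q\<close> satisfies
  \<open>q * d = n ^ t - a ^ t = (n - a) * s\<close> with \<open>s = n ^ (t - 1) + \<dots> + a ^ (t - 1)\<close>, and both factors
  exceed \<open>d\<close>. A prime \<open>q\<close> would divide one of them, forcing the other to be at most \<open>d\<close>.\<close>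

lemma not_prime_if_mult_eq_mult_of_greater:
  fixes q d x y :: int
  assumes eq: "q * d = x * y" and "0 < d" "d < x" "d < y"
  shows "\<not> prime q"
proof
  assume "prime q"
  have cofactor_le: "v \<le> d" if "q * d = u * v" "q dvd u" "d < u" for u v
  proof -
    from \<open>q dvd u\<close> obtain k where k: "u = q * k" by blast
    with that(1) \<open>prime q\<close> have "d = k * v" by (simp add: prime_gt_0_int)
    moreover from k that(3) \<open>0 < d\<close> \<open>prime q\<close> have "k > 0"
      by (metis prime_gt_0_int zero_less_mult_pos order.strict_trans)
    moreover have "v > 0" using \<open>d = k * v\<close> \<open>0 < d\<close> \<open>k > 0\<close> zero_less_mult_pos by blast
    ultimately show "v \<le> d" by (simp add: mult_le_cancel_right1)
  qed
  have "q dvd x * y" using eq by (metis dvd_triv_left)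
  then have "q dvd x \<or> q dvd y" using \<open>prime q\<close> by (simp add: prime_dvd_mult_iff)
  then show False
    using cofactor_le[of x y] cofactor_le[of y x] eq assms(2-4) by (auto simp: mult.commute)
qed

lemma composite_if_mult_eq_mult_of_greater:
  fixes q d x y :: int
  assumes "q * d = x * y" and "0 < d" "d < x" "d < y"
  shows "composite q"
proof -
  have "d * d < x * y" using assms(2-4) by (intro mult_strict_mono) auto
  then have "q > d" using assms(1,2) by (metis mult_less_cancel_right_pos)
  then show ?thesis
    using assms not_prime_if_mult_eq_mult_of_greater unfolding composite_def by auto
qed

lemma power_diff_factor_ge_power:
  fixes a n :: "'a::linordered_idom"
  assumes "0 \<le> a" "0 \<le> n" "t \<ge> 1"
  obtains s where "n ^ t - a ^ t = (n - a) * s" "n ^ (t - 1) \<le> s"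
proof
  let ?s = "\<Sum>i<t. a ^ (t - Suc i) * n ^ i"
  show "n ^ t - a ^ t = (n - a) * ?s" by (rule power_diff_sumr2)
  have "a ^ (t - Suc (t - 1)) * n ^ (t - 1) \<le> ?s"
    by (rule member_le_sum) (use assms in auto)
  then show "n ^ (t - 1) \<le> ?s" using assms(3) by simp
qed

lemma abs_less_if_power_abs_less:
  fixes r d :: int
  assumes "\<bar>r\<bar> ^ t < d" "t \<ge> 1" "0 < d"
  shows "\<bar>r\<bar> < d"
proof (cases "r = 0")
  case False
  then have "\<bar>r\<bar> \<le> \<bar>r\<bar> ^ t" using assms(2) by (simp add: self_le_power)
  with assms(1) show ?thesis by linarith
qed (use assms in simp)

theorem lemma1:
  fixes t :: nat and d n :: int
  assumes "t \<ge> 2" and "d \<ge> 2" and "n \<ge> 2 * d"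
    and "\<exists>r::int. [n ^ t = r ^ t] (mod d) \<and> 0 \<le> r ^ t \<and> r ^ t < d"
  shows "composite \<lfloor>(of_int n ^ t :: real) / of_int d\<rfloor>"
proof -
  obtain r :: int where r: "[n ^ t = r ^ t] (mod d)" "0 \<le> r ^ t" "r ^ t < d"
    using assms(4) by blast
  define a where "a = \<bar>r\<bar>"
  have a_pow: "a ^ t = r ^ t" unfolding a_def using r(2) by (metis abs_of_nonneg power_abs)
  have "a < d" using abs_less_if_power_abs_less[of r t d] a_pow r(3) assms(1,2)
    unfolding a_def by simp
  have "n ^ t mod d = a ^ t" using r a_pow unfolding cong_def by simp
  then have div_eq: "(n ^ t div d) * d = n ^ t - a ^ t" by (metis div_mult_mod_eq add_diff_cancel_right')
  obtain s where s: "n ^ t - a ^ t = (n - a) * s" "n ^ (t - 1) \<le> s"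
    using power_diff_factor_ge_power[of a n t] assms unfolding a_def by auto
  have "n \<le> n ^ (t - 1)" using assms by (simp add: self_le_power)
  then have "composite (n ^ t div d)"
    using composite_if_mult_eq_mult_of_greater[of "n ^ t div d" d "n - a" s]
      div_eq s \<open>a < d\<close> assms(2,3) by linarith
  then show ?thesis by (metis floor_divide_of_int_eq of_int_power)
qed

end
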